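(* Let $H$ be a connected nontrivial graph of order $n$ and let $r\ge 1$ be an integer. Then $$n(r + 1) + r(dim_s(H) - 1)\le dim_s(C_{2r+1}\boxtimes H)\le n(r + 1) + r\cdot dim_s(H).$$
   Context: $C_{m}$ is the cycle on $m$ vertices. For a connected graph $G$ with shortest-path distance $d_G$, a vertex $w$ strongly resolves $u,v$ if $d_G(w,u)=d_G(w,v)+d_G(v,u)$ or $d_G(w,v)=d_G(w,u)+d_G(u,v)$; $dim_s(G)$ is the minimum cardinality of a set $S\subseteq V(G)$ such that every pair of vertices is strongly resolved by some vertex of $S$. The strong product $G\boxtimes H$ has vertex set $V(G)\times V(H)$, with $(a,b)\sim(c,d)$ iff ($a=c$ and $bd\in E(H)$) or ($ac\in E(G)$ and $b=d$) or ($ac\in E(G)$ and $bd\in E(H)$). Nontrivial means at least two vertices. *)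

theory Defs
  imports Main
begin

record 'a graph =
  verts :: "'a set"
  adj :: "'a \<Rightarrow> 'a \<Rightarrow> bool"

definition simple_graph :: "'a graph \<Rightarrow> bool" where
  "simple_graph G \<longleftrightarrow> finite (verts G)
     \<and> (\<forall>u v. adj G u v \<longrightarrow> u \<in> verts G \<and> v \<in> verts G)
     \<and> (\<forall>u v. adj G u v \<longrightarrow> adj G v u)
     \<and> (\<forall>u. \<not> adj G u u)"

inductive walk_len :: "'a graph \<Rightarrow> 'a \<Rightarrow> 'a \<Rightarrow> nat \<Rightarrow> bool" for G where
  walk_nil: "u \<in> verts G \<Longrightarrow> walk_len G u u 0"
| walk_step: "adj G u w \<Longrightarrow> walk_len G w v k \<Longrightarrow> walk_len G u v (Suc k)"

definition connected_graph :: "'a graph \<Rightarrow> bool" where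
  "connected_graph G \<longleftrightarrow> (\<forall>u\<in>verts G. \<forall>v\<in>verts G. \<exists>k. walk_len G u v k)"

definition gdist :: "'a graph \<Rightarrow> 'a \<Rightarrow> 'a \<Rightarrow> nat" where
  "gdist G u v = (LEAST k. walk_len G u v k)"

definition strongly_resolves :: "'a graph \<Rightarrow> 'a \<Rightarrow> 'a \<Rightarrow> 'a \<Rightarrow> bool" where
  "strongly_resolves G w u v \<longleftrightarrow>
     gdist G w u = gdist G w v + gdist G v u \<or> gdist G w v = gdist G w u + gdist G u v"

definition strong_resolving_set :: "'a graph \<Rightarrow> 'a set \<Rightarrow> bool" where
  "strong_resolving_set G S \<longleftrightarrow> S \<subseteq> verts G \<and>
     (\<forall>u\<in>verts G. \<forall>v\<in>verts G. u \<noteq> v \<longrightarrow> (\<exists>w\<in>S. strongly_resolves G w u v))"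

definition strong_metric_dim :: "'a graph \<Rightarrow> nat" where
  "strong_metric_dim G = (LEAST k. \<exists>S. strong_resolving_set G S \<and> card S = k)"

definition strong_product :: "'a graph \<Rightarrow> 'b graph \<Rightarrow> ('a \<times> 'b) graph" where
  "strong_product G H = \<lparr> verts = verts G \<times> verts H,
     adj = (\<lambda>(a, b) (c, d). (a = c \<and> adj H b d) \<or> (adj G a c \<and> b = d) \<or> (adj G a c \<and> adj H b d)) \<rparr>"

text \<open>The cycle C_m on vertices 0..m-1 (intended for m \<ge> 3).\<close>
definition cycle_graph :: "nat \<Rightarrow> nat graph" where
  "cycle_graph m = \<lparr> verts = {0..<m},
     adj = (\<lambda>i j. i < m \<and> j < m \<and> i \<noteq> j \<and> (Suc i mod m = j \<or> Suc j mod m = i)) \<rparr>"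

end

theory Submission
  imports Defs
begin

text \<open>
  A vertex set is strongly resolving exactly when it meets every pair of mutually maximally
  distant (MMD) vertices, so the strong metric dimension is the number of vertices minus the
  size of a largest MMD-free vertex set.

  In the strong product of the cycle C(2r + 1) with H the distance is the maximum of the two
  coordinate distances. A pair (a, b), (c, d) can only be MMD if a, c are antipodal on the cycle
  or b, d are MMD in H, so for a strong resolving set W of H the set
  {0..2r} \<times> W \<union> {0..r} \<times> (V(H) - W) is strongly resolving, which gives the upper bound.
  Conversely, the pair is MMD when a, c are antipodal and b = d or b, d are MMD in H, and when
  b, d are MMD in H at a distance exceeding that of a and c.

  Now let M be MMD-free. Twins of H in equal or antipodal cycle positions would be MMD,
  so the positions over one twin class form a set X with X and X + r disjoint, and such an X
  meets at least (2r + 1)|X| / r of the triangles {p, p + r, p + 2r}. The twin classes meeting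
  one triangle have pairwise non-MMD representatives, so there are at most |V(H)| - dim_s(H) of
  them. Double counting gives |M| \<le> r (|V(H)| - dim_s(H)): the upper bound is attained.
\<close>

lemma finite_obtains_greatest:
  fixes f :: "'a \<Rightarrow> 'b::linorder"
  assumes "finite A" "x \<in> A"
  obtains y where "y \<in> A" "\<And>z. z \<in> A \<Longrightarrow> f z \<le> f y"
proof -
  have "Max (f ` A) \<in> f ` A" using assms by (intro Max_in) auto
  then obtain y where "y \<in> A" "f y = Max (f ` A)" by auto
  with assms show thesis by (intro that[of y]) auto
qed

section \<open>Distances in connected graphs\<close>

text \<open>
  Adjacency is only required to lead from vertices to vertices, not to start at one:
  the strong product also relates (a, b) and (a, d) when a is not a vertex.
\<close>

locale connected_simple_graph =
  fixes G :: "'v graph"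
  assumes finite_verts: "finite (verts G)"
    and adj_in_verts: "adj G u v \<Longrightarrow> u \<in> verts G \<Longrightarrow> v \<in> verts G"
    and adj_sym: "adj G u v \<Longrightarrow> adj G v u"
    and adj_irrefl: "\<not> adj G u u"
    and connected: "connected_graph G"

lemma walk_len_end_in_verts: "walk_len G u v k \<Longrightarrow> v \<in> verts G"
  by (induction rule: walk_len.induct) auto

lemma connected_simple_graph_if_simple:
  "simple_graph G \<Longrightarrow> connected_graph G \<Longrightarrow> connected_simple_graph G"
  unfolding simple_graph_def connected_simple_graph_def by blast

context connected_simple_graph
begin

lemma walk_len_snoc: "walk_len G u w k \<Longrightarrow> adj G w v \<Longrightarrow> walk_len G u v (Suc k)"
proof (induction rule: walk_len.induct)
  case (walk_nil u)
  then show ?case by (meson adj_in_verts walk_len.simps)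
qed (simp add: walk_len.walk_step)

lemma walk_len_sym: "walk_len G u v k \<Longrightarrow> walk_len G v u k"
  by (induction rule: walk_len.induct) (auto intro: walk_len.walk_nil walk_len_snoc adj_sym)

lemma walk_len_trans: "walk_len G u w k \<Longrightarrow> walk_len G w v l \<Longrightarrow> walk_len G u v (k + l)"
  by (induction rule: walk_len.induct) (auto intro: walk_len.walk_step)

lemma walk_len_gdist: "u \<in> verts G \<Longrightarrow> v \<in> verts G \<Longrightarrow> walk_len G u v (gdist G u v)"
  unfolding gdist_def using connected unfolding connected_graph_def by (meson LeastI_ex)

lemma gdist_le_walk_len: "walk_len G u v k \<Longrightarrow> gdist G u v \<le> k"
  unfolding gdist_def by (rule Least_le)

lemma gdist_sym: "u \<in> verts G \<Longrightarrow> v \<in> verts G \<Longrightarrow> gdist G u v = gdist G v u"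
  by (meson antisym gdist_le_walk_len walk_len_gdist walk_len_sym)

lemma gdist_triangle:
  "u \<in> verts G \<Longrightarrow> v \<in> verts G \<Longrightarrow> w \<in> verts G \<Longrightarrow> gdist G u v \<le> gdist G u w + gdist G w v"
  by (meson gdist_le_walk_len walk_len_gdist walk_len_trans)

lemma gdist_self: "u \<in> verts G \<Longrightarrow> gdist G u u = 0"
  using gdist_le_walk_len walk_len.walk_nil by fastforce

lemma gdist_eq_0_iff: "u \<in> verts G \<Longrightarrow> v \<in> verts G \<Longrightarrow> gdist G u v = 0 \<longleftrightarrow> u = v"
  using walk_len_gdist[of u v] gdist_self by (auto elim: walk_len.cases)

lemma gdist_adj_le:
  "adj G u w \<Longrightarrow> u \<in> verts G \<Longrightarrow> v \<in> verts G \<Longrightarrow> gdist G u v \<le> gdist G w v + 1"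
  using walk_len_gdist[of w v] adj_in_verts gdist_le_walk_len walk_len.walk_step by fastforce

lemma gdist_step:
  assumes "u \<in> verts G" "v \<in> verts G" "u \<noteq> v"
  obtains w where "adj G u w" "gdist G w v + 1 = gdist G u v"
proof -
  obtain w k where w: "adj G u w" "walk_len G w v k" "gdist G u v = Suc k"
    using walk_len_gdist[of u v] assms by (cases rule: walk_len.cases) auto
  then have "gdist G w v + 1 = gdist G u v"
    using gdist_le_walk_len[OF w(2)] gdist_adj_le[OF w(1) assms(1,2)] by linarith
  with w(1) show thesis by (rule that)
qed

lemma obtain_step_towards:
  assumes "u \<in> verts G" "v \<in> verts G" "gdist G u v \<le> Suc k"
  obtains u' where "(u = v \<and> u' = u) \<or> (u \<noteq> v \<and> adj G u u')" "u' \<in> verts G" "gdist G u' v \<le> k"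
proof (cases "u = v")
  case True
  then show ?thesis using that assms gdist_self by auto
next
  case False
  then obtain u' where "adj G u u'" "gdist G u' v + 1 = gdist G u v"
    using gdist_step assms by blast
  then show ?thesis using that assms False adj_in_verts by fastforce
qed

lemma gdist_eq_1_iff_adj: "u \<in> verts G \<Longrightarrow> v \<in> verts G \<Longrightarrow> gdist G u v = 1 \<longleftrightarrow> adj G u v"
proof
  assume uv: "u \<in> verts G" "v \<in> verts G" and d: "gdist G u v = 1"
  then have "u \<noteq> v" using gdist_self by auto
  then obtain w where w: "adj G u w" "gdist G w v + 1 = gdist G u v"
    using gdist_step uv by blast
  then have "w = v" using d gdist_eq_0_iff adj_in_verts uv by auto
  with w show "adj G u v" by simp
next
  assume uv: "u \<in> verts G" "v \<in> verts G" and a: "adj G u v"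
  then have "u \<noteq> v" using adj_irrefl by blast
  then show "gdist G u v = 1"
    using gdist_adj_le[OF a uv] gdist_self gdist_eq_0_iff uv by fastforce
qed

end

section \<open>Mutually maximally distant vertices\<close>

definition maximally_distant :: "'a graph \<Rightarrow> 'a \<Rightarrow> 'a \<Rightarrow> bool" where
  "maximally_distant G u v \<longleftrightarrow> (\<forall>w. adj G u w \<longrightarrow> gdist G w v \<le> gdist G u v)"

definition mutually_maximally_distant :: "'a graph \<Rightarrow> 'a \<Rightarrow> 'a \<Rightarrow> bool" where
  "mutually_maximally_distant G u v \<longleftrightarrow> u \<in> verts G \<and> v \<in> verts G \<and> u \<noteq> v
     \<and> maximally_distant G u v \<and> maximally_distant G v u"

lemma mutually_maximally_distant_sym:
  "mutually_maximally_distant G u v \<Longrightarrow> mutually_maximally_distant G v u"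
  unfolding mutually_maximally_distant_def by blast

context connected_simple_graph
begin

lemma gdist_lt_via_maximally_distant:
  assumes max: "maximally_distant G y x" and V: "x \<in> verts G" "y \<in> verts G" "w \<in> verts G"
    and "w \<noteq> y"
  shows "gdist G w x < gdist G w y + gdist G y x"
proof -
  \<comment> \<open>a step from y towards w gets no farther from x\<close>
  obtain y' where y': "adj G y y'" "gdist G y' w + 1 = gdist G y w"
    using gdist_step V \<open>w \<noteq> y\<close> by metis
  have y'V: "y' \<in> verts G" using adj_in_verts[OF y'(1) V(2)] .
  have "gdist G w x \<le> gdist G w y' + gdist G y' x" using gdist_triangle V y'V by blast
  moreover have "gdist G y' x \<le> gdist G y x" using max y'(1) unfolding maximally_distant_def by blast
  moreover have "gdist G w y = gdist G y w" "gdist G w y' = gdist G y' w"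
    using gdist_sym V y'V by auto
  ultimately show ?thesis using y'(2) by linarith
qed

lemma strong_resolving_set_covers_mmd:
  assumes S: "strong_resolving_set G S" and mmd: "mutually_maximally_distant G u v"
  shows "u \<in> S \<or> v \<in> S"
proof (rule ccontr)
  assume not_in: "\<not> (u \<in> S \<or> v \<in> S)"
  have V: "u \<in> verts G" "v \<in> verts G" "u \<noteq> v"
    and max: "maximally_distant G u v" "maximally_distant G v u"
    using mmd unfolding mutually_maximally_distant_def by auto
  obtain w where w: "w \<in> S" "strongly_resolves G w u v"
    using S V unfolding strong_resolving_set_def by blast
  have "w \<in> verts G" "w \<noteq> u" "w \<noteq> v"
    using S w not_in unfolding strong_resolving_set_def by auto
  then show False
    using w(2) gdist_lt_via_maximally_distant[OF max(1)] gdist_lt_via_maximally_distant[OF max(2)] V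
    unfolding strongly_resolves_def by fastforce
qed

lemma obtain_maximally_distant_beyond:
  assumes uV: "u \<in> verts G" and vV: "v \<in> verts G"
  obtains x where "x \<in> verts G" "gdist G v x = gdist G v u + gdist G u x" "maximally_distant G x v"
proof -
  let ?d = "gdist G"
  \<comment> \<open>extend a shortest v-u path beyond u as far as possible\<close>
  define A where "A = {x \<in> verts G. ?d v x = ?d v u + ?d u x}"
  have "finite A" "u \<in> A" using finite_verts uV gdist_self unfolding A_def by auto
  then obtain x where "x \<in> A" and x_max: "\<And>z. z \<in> A \<Longrightarrow> ?d v z \<le> ?d v x"
    using finite_obtains_greatest[of A u "?d v"] by blast
  then have xV: "x \<in> verts G" and x_beyond: "?d v x = ?d v u + ?d u x" unfolding A_def by auto
  have "?d w v \<le> ?d x v" if w: "adj G x w" for w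
  proof -
    have wV: "w \<in> verts G" using adj_in_verts[OF w xV] .
    have "?d w v \<le> ?d x v + 1" "?d w u \<le> ?d x u + 1"
      using gdist_adj_le[OF adj_sym[OF w] wV] vV uV by blast+
    then have "?d v w \<le> ?d v x + 1" "?d u w \<le> ?d u x + 1"
      using gdist_sym wV vV uV xV by simp_all
    moreover have "?d v w \<le> ?d v u + ?d u w" using gdist_triangle vV wV uV by blast
    ultimately have "?d v w \<le> ?d v x \<or> w \<in> A" using x_beyond wV unfolding A_def by auto
    then show ?thesis using x_max[of w] gdist_sym wV vV xV by fastforce
  qed
  then have "maximally_distant G x v" unfolding maximally_distant_def by blast
  with xV x_beyond show thesis by (rule that)
qed

lemma strong_resolving_set_if_covers_mmd:
  assumes SV: "S \<subseteq> verts G"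
    and covers: "\<And>x y. mutually_maximally_distant G x y \<Longrightarrow> x \<in> S \<or> y \<in> S"
  shows "strong_resolving_set G S"
  unfolding strong_resolving_set_def
proof (intro conjI ballI impI SV)
  fix u v assume uV: "u \<in> verts G" and vV: "v \<in> verts G" and "u \<noteq> v"
  let ?d = "gdist G"
  obtain x where xV: "x \<in> verts G" and x_beyond: "?d v x = ?d v u + ?d u x"
    and x_max: "maximally_distant G x v"
    using obtain_maximally_distant_beyond uV vV by blast
  obtain y where yV: "y \<in> verts G" and y_beyond: "?d x y = ?d x v + ?d v y"
    and y_max: "maximally_distant G y x"
    using obtain_maximally_distant_beyond vV xV by blast
  have "?d u v > 0" using gdist_eq_0_iff uV vV \<open>u \<noteq> v\<close> by blast
  then have "?d x v > 0" using x_beyond gdist_sym uV vV xV by auto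
  then have "x \<noteq> y" using y_beyond gdist_self xV by auto
  moreover have "maximally_distant G x y"
    unfolding maximally_distant_def
  proof (intro allI impI)
    fix w assume w: "adj G x w"
    have wV: "w \<in> verts G" using adj_in_verts[OF w xV] .
    have "?d w y \<le> ?d w v + ?d v y" using gdist_triangle wV yV vV by blast
    also have "\<dots> \<le> ?d x v + ?d v y" using x_max w unfolding maximally_distant_def by simp
    finally show "?d w y \<le> ?d x y" using y_beyond by simp
  qed
  ultimately have "x \<in> S \<or> y \<in> S"
    using covers xV yV y_max unfolding mutually_maximally_distant_def by blast
  moreover have "strongly_resolves G x u v"
    unfolding strongly_resolves_def using x_beyond gdist_sym uV vV xV by auto
  moreover have "strongly_resolves G y u v"
  proof -
    have "?d x y \<le> ?d x u + ?d u y" "?d u y \<le> ?d u v + ?d v y"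
      using gdist_triangle xV yV uV vV by blast+
    then have "?d u y = ?d u v + ?d v y" using x_beyond y_beyond gdist_sym uV vV xV by auto
    then show ?thesis unfolding strongly_resolves_def using gdist_sym yV uV vV by auto
  qed
  ultimately show "\<exists>w\<in>S. strongly_resolves G w u v" by blast
qed

lemma strong_metric_dim_le: "strong_resolving_set G S \<Longrightarrow> strong_metric_dim G \<le> card S"
  unfolding strong_metric_dim_def by (rule Least_le) blast

lemma strong_metric_basis_exists:
  obtains S where "strong_resolving_set G S" "card S = strong_metric_dim G"
proof -
  have "strong_resolving_set G (verts G)"
    by (rule strong_resolving_set_if_covers_mmd) (auto simp: mutually_maximally_distant_def)
  then have "\<exists>S. strong_resolving_set G S \<and> card S = strong_metric_dim G"
    unfolding strong_metric_dim_def by (intro LeastI_ex[of "\<lambda>k. \<exists>S. _ S \<and> card S = k"]) blast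
  with that show thesis by blast
qed

lemma strong_metric_dim_le_verts: "strong_metric_dim G \<le> card (verts G)"
proof -
  obtain S where "strong_resolving_set G S" "card S = strong_metric_dim G"
    by (rule strong_metric_basis_exists)
  moreover from this(1) have "card S \<le> card (verts G)"
    using card_mono[OF finite_verts] unfolding strong_resolving_set_def by blast
  ultimately show ?thesis by simp
qed

lemma strong_metric_dim_le_card_diff_mmd_free:
  assumes "I \<subseteq> verts G" "\<And>x y. x \<in> I \<Longrightarrow> y \<in> I \<Longrightarrow> \<not> mutually_maximally_distant G x y"
  shows "strong_metric_dim G \<le> card (verts G) - card I"
proof -
  have "strong_resolving_set G (verts G - I)"
  proof (rule strong_resolving_set_if_covers_mmd)
    fix x y assume xy: "mutually_maximally_distant G x y"
    then have "x \<in> verts G" "y \<in> verts G" unfolding mutually_maximally_distant_def by simp_all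
    with assms(2)[of x y] xy show "x \<in> verts G - I \<or> y \<in> verts G - I" by blast
  qed blast
  then have "strong_metric_dim G \<le> card (verts G - I)" by (rule strong_metric_dim_le)
  also have "\<dots> = card (verts G) - card I"
    using assms(1) finite_verts by (meson card_Diff_subset finite_subset)
  finally show ?thesis .
qed

end

section \<open>Twins\<close>

definition closed_nbhd :: "'a graph \<Rightarrow> 'a \<Rightarrow> 'a set" where
  "closed_nbhd G b = insert b {w. adj G b w}"

lemma adj_if_twins:
  assumes "b \<noteq> d" "closed_nbhd G b = closed_nbhd G d"
  shows "adj G b d"
proof -
  have "d \<in> closed_nbhd G b" using assms(2) unfolding closed_nbhd_def by simp
  with assms(1) show ?thesis unfolding closed_nbhd_def by auto
qed

context connected_simple_graph
begin

lemma maximally_distant_if_twins: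
  assumes V: "b \<in> verts G" "d \<in> verts G" and twins: "b \<noteq> d" "closed_nbhd G b = closed_nbhd G d"
  shows "maximally_distant G b d"
  unfolding maximally_distant_def
proof (intro allI impI)
  fix w assume bw: "adj G b w"
  have "gdist G b d = 1" using adj_if_twins[OF twins] gdist_eq_1_iff_adj[OF V] by simp
  moreover have "w = d \<or> adj G d w" using bw twins(2) unfolding closed_nbhd_def by auto
  then have "gdist G w d \<le> 1"
  proof
    assume "adj G d w"
    then have "w \<in> verts G" "gdist G d w = 1" using adj_in_verts gdist_eq_1_iff_adj V by blast+
    then show ?thesis using gdist_sym V by simp
  qed (simp add: gdist_self V)
  ultimately show "gdist G w d \<le> gdist G b d" by simp
qed

lemma mmd_if_twins:
  assumes "b \<in> verts G" "d \<in> verts G" "b \<noteq> d" "closed_nbhd G b = closed_nbhd G d"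
  shows "mutually_maximally_distant G b d"
  unfolding mutually_maximally_distant_def
  using assms maximally_distant_if_twins[of b d] maximally_distant_if_twins[of d b] by simp

lemma closed_nbhd_subset_if_maximally_distant_adj:
  assumes "x \<in> verts G" "maximally_distant G x y" "adj G x y"
  shows "closed_nbhd G x \<subseteq> closed_nbhd G y"
proof
  fix z assume z: "z \<in> closed_nbhd G x"
  have yV: "y \<in> verts G" using adj_in_verts assms by blast
  show "z \<in> closed_nbhd G y"
  proof (cases "z = x")
    case True
    then show ?thesis using assms(3) adj_sym unfolding closed_nbhd_def by blast
  next
    case False
    then have xz: "adj G x z" using z unfolding closed_nbhd_def by blast
    then have zV: "z \<in> verts G" using adj_in_verts assms(1) by blast
    have "gdist G x y = 1" using assms gdist_eq_1_iff_adj yV by blast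
    then have "gdist G z y \<le> 1" using assms(2) xz unfolding maximally_distant_def by fastforce
    then have "gdist G z y = 0 \<or> gdist G z y = 1" by linarith
    then have "z = y \<or> adj G z y" using gdist_eq_0_iff gdist_eq_1_iff_adj zV yV by blast
    then show ?thesis using adj_sym unfolding closed_nbhd_def by blast
  qed
qed

lemma gdist_ge_2_if_mmd_not_twins:
  assumes mmd: "mutually_maximally_distant G b d" and "closed_nbhd G b \<noteq> closed_nbhd G d"
  shows "2 \<le> gdist G b d"
proof (rule ccontr)
  assume "\<not> 2 \<le> gdist G b d"
  moreover have V: "b \<in> verts G" "d \<in> verts G" "b \<noteq> d"
    and max: "maximally_distant G b d" "maximally_distant G d b"
    using mmd unfolding mutually_maximally_distant_def by auto
  ultimately have "gdist G b d = 1" using gdist_eq_0_iff by fastforce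
  then have "adj G b d" using gdist_eq_1_iff_adj V by blast
  then have "closed_nbhd G b \<subseteq> closed_nbhd G d" "closed_nbhd G d \<subseteq> closed_nbhd G b"
    using closed_nbhd_subset_if_maximally_distant_adj V max adj_sym by blast+
  with assms(2) show False by blast
qed

end

section \<open>The odd cycle\<close>

definition cyc_succ :: "nat \<Rightarrow> nat \<Rightarrow> nat" where
  "cyc_succ m a = (if Suc a < m then Suc a else 0)"

definition cyc_pred :: "nat \<Rightarrow> nat \<Rightarrow> nat" where
  "cyc_pred m a = (if a = 0 then m - 1 else a - 1)"

definition cyc_dist :: "nat \<Rightarrow> nat \<Rightarrow> nat \<Rightarrow> nat" where
  "cyc_dist m a c = (let t = (if a \<le> c then c - a else a - c) in min t (m - t))"

lemma cyc_dist_le_case: "a \<le> c \<Longrightarrow> cyc_dist m a c = min (c - a) (m - (c - a))"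
  by (simp add: cyc_dist_def)

lemma cyc_dist_ge_case: "c \<le> a \<Longrightarrow> cyc_dist m a c = min (a - c) (m - (a - c))"
  by (auto simp: cyc_dist_def)

lemma cyc_dist_self [simp]: "cyc_dist m a a = 0"
  by (simp add: cyc_dist_def)

lemma cyc_dist_sym: "cyc_dist m a c = cyc_dist m c a"
  by (simp add: cyc_dist_def Let_def)

lemma cyc_dist_eq_0_iff: "a < m \<Longrightarrow> c < m \<Longrightarrow> cyc_dist m a c = 0 \<longleftrightarrow> a = c"
  by (auto simp: cyc_dist_def Let_def split: if_splits)

lemma cyc_dist_le_radius: "cyc_dist (2 * r + 1) a c \<le> r"
  by (auto simp: cyc_dist_def Let_def)

lemma cyc_dist_lt_radius_upper_half:
  "r < a \<Longrightarrow> r < c \<Longrightarrow> a < 2 * r + 1 \<Longrightarrow> c < 2 * r + 1 \<Longrightarrow> cyc_dist (2 * r + 1) a c < r"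
  by (auto simp: cyc_dist_def Let_def)

lemma cyc_dist_add_radius: "p < 2 * r + 1 \<Longrightarrow> cyc_dist (2 * r + 1) p ((p + r) mod (2 * r + 1)) = r"
  by (cases "p + r < 2 * r + 1") (auto simp: cyc_dist_le_case cyc_dist_ge_case le_mod_geq)

lemma cyc_dist_add_diameter:
  "1 \<le> r \<Longrightarrow> p < 2 * r + 1 \<Longrightarrow> cyc_dist (2 * r + 1) p ((p + 2 * r) mod (2 * r + 1)) = 1"
  by (cases "p + 2 * r < 2 * r + 1") (auto simp: cyc_dist_le_case cyc_dist_ge_case le_mod_geq)

lemma Suc_mod_eq_cyc_succ: "a < m \<Longrightarrow> Suc a mod m = cyc_succ m a"
proof (cases "Suc a < m")
  case False
  assume "a < m"
  with False have "Suc a = m" by simp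
  then show ?thesis using False by (simp add: cyc_succ_def)
qed (simp add: cyc_succ_def)

lemma cyc_succ_pred: "a < m \<Longrightarrow> cyc_succ m (cyc_pred m a) = a"
  by (auto simp: cyc_succ_def cyc_pred_def)

lemma verts_cycle_graph: "verts (cycle_graph m) = {0..<m}"
  by (simp add: cycle_graph_def)

lemma cycle_graph_adj_iff:
  "adj (cycle_graph m) a b \<longleftrightarrow> a < m \<and> b < m \<and> a \<noteq> b \<and> (b = cyc_succ m a \<or> a = cyc_succ m b)"
  by (auto simp add: cycle_graph_def Suc_mod_eq_cyc_succ)

lemma simple_graph_cycle_graph: "simple_graph (cycle_graph m)"
  unfolding simple_graph_def cycle_graph_def by auto

lemma adj_cyc_succ: "a < m \<Longrightarrow> 3 \<le> m \<Longrightarrow> adj (cycle_graph m) a (cyc_succ m a)"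
  unfolding cycle_graph_adj_iff by (auto simp: cyc_succ_def)

lemma adj_cyc_pred: "a < m \<Longrightarrow> 3 \<le> m \<Longrightarrow> adj (cycle_graph m) a (cyc_pred m a)"
  unfolding cycle_graph_adj_iff using cyc_succ_pred by (auto simp: cyc_pred_def split: if_splits)

lemma cyc_dist_cyc_succ_le:
  assumes "a < m" "c < m"
  shows "cyc_dist m (cyc_succ m a) c \<le> cyc_dist m a c + 1 \<and> cyc_dist m a c \<le> cyc_dist m (cyc_succ m a) c + 1"
proof -
  consider "c \<le> a" "Suc a < m" | "a < c" | "c \<le> a" "Suc a = m"
    using assms by linarith
  then show ?thesis
    using assms by cases (auto simp: cyc_dist_le_case cyc_dist_ge_case min_def cyc_succ_def)
qed

lemma cyc_dist_adj_le: "adj (cycle_graph m) a a' \<Longrightarrow> c < m \<Longrightarrow> cyc_dist m a c \<le> cyc_dist m a' c + 1"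
  unfolding cycle_graph_adj_iff using cyc_dist_cyc_succ_le by blast

lemma cyc_dist_step_toward:
  assumes "a < m" "c < m" "a \<noteq> c"
  shows "cyc_dist m (cyc_succ m a) c + 1 = cyc_dist m a c \<or> cyc_dist m (cyc_pred m a) c + 1 = cyc_dist m a c"
proof (cases "a < c")
  case True
  show ?thesis
  proof (cases "2 * (c - a) \<le> m")
    case True
    then have "cyc_succ m a = Suc a" using \<open>a < c\<close> assms by (simp add: cyc_succ_def)
    then show ?thesis using True \<open>a < c\<close> by (simp add: cyc_dist_le_case Suc_diff_Suc)
  next
    case False
    then have "cyc_pred m a = (if a = 0 then m - 1 else a - 1)" by (simp add: cyc_pred_def)
    then show ?thesis using False \<open>a < c\<close> assms
      by (cases "a = 0") (simp_all add: cyc_dist_le_case cyc_dist_ge_case Suc_diff_Suc Suc_diff_le)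
  qed
next
  case False
  then have "c < a" using assms(3) by simp
  show ?thesis
  proof (cases "2 * (a - c) \<le> m")
    case True
    then have "cyc_pred m a = a - 1" using \<open>c < a\<close> by (simp add: cyc_pred_def)
    then show ?thesis using True \<open>c < a\<close> by (simp add: cyc_dist_ge_case Suc_diff_Suc Suc_diff_le)
  next
    case False
    show ?thesis
    proof (cases "Suc a < m")
      case True
      then have "cyc_succ m a = Suc a" by (simp add: cyc_succ_def)
      moreover have "Suc (m + c - Suc a) = m + c - a" using True by linarith
      ultimately show ?thesis using False \<open>c < a\<close> by (simp add: cyc_dist_ge_case)
    next
      case wrap: False
      then have "cyc_succ m a = 0" "m = Suc a" using assms(1) by (simp_all add: cyc_succ_def)
      then show ?thesis using False \<open>c < a\<close> by (simp add: cyc_dist_le_case cyc_dist_ge_case)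
    qed
  qed
qed

lemma cyc_dist_step_away:
  assumes "a < 2 * r + 1" "c < 2 * r + 1" "cyc_dist (2 * r + 1) a c < r"
  shows "cyc_dist (2 * r + 1) (cyc_succ (2 * r + 1) a) c = cyc_dist (2 * r + 1) a c + 1
    \<or> cyc_dist (2 * r + 1) (cyc_pred (2 * r + 1) a) c = cyc_dist (2 * r + 1) a c + 1"
    (is "?d (cyc_succ ?m a) c = _ \<or> ?d (cyc_pred ?m a) c = _")
proof (cases "a \<le> c")
  case True
  show ?thesis
  proof (cases "2 * (c - a) \<le> ?m")
    case near: True
    show ?thesis
    proof (cases "a = 0")
      case True
      then have "cyc_pred ?m a = 2 * r" by (simp add: cyc_pred_def)
      then show ?thesis using True near assms by (simp add: cyc_dist_le_case cyc_dist_ge_case)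
    next
      case False
      then have "cyc_pred ?m a = a - 1" by (simp add: cyc_pred_def)
      then show ?thesis using False near \<open>a \<le> c\<close> assms by (simp add: cyc_dist_le_case Suc_diff_le)
    qed
  next
    case False
    then have "cyc_succ ?m a = Suc a" using \<open>a \<le> c\<close> assms(2) by (simp add: cyc_succ_def)
    then show ?thesis using False \<open>a \<le> c\<close> assms by (simp add: cyc_dist_le_case Suc_diff_le)
  qed
next
  case False
  then have "c < a" by simp
  show ?thesis
  proof (cases "2 * (a - c) \<le> ?m")
    case near: True
    show ?thesis
    proof (cases "Suc a < ?m")
      case True
      then have "cyc_succ ?m a = Suc a" by (simp add: cyc_succ_def)
      then show ?thesis using True near \<open>c < a\<close> assms by (simp add: cyc_dist_ge_case Suc_diff_le)
    next
      case False
      then have "cyc_succ ?m a = 0" "a = 2 * r" using assms(1) by (simp_all add: cyc_succ_def)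
      then show ?thesis using near \<open>c < a\<close> assms by (simp add: cyc_dist_le_case cyc_dist_ge_case Suc_diff_le)
    qed
  next
    case False
    then have "cyc_pred ?m a = a - 1" using \<open>c < a\<close> by (simp add: cyc_pred_def)
    then show ?thesis using False \<open>c < a\<close> assms by (simp add: cyc_dist_ge_case Suc_diff_le)
  qed
qed

definition cyc_triangle :: "nat \<Rightarrow> nat \<Rightarrow> nat set" where
  "cyc_triangle r p = {p, (p + r) mod (2 * r + 1), (p + 2 * r) mod (2 * r + 1)}"

lemma cyc_dist_in_cyc_triangle:
  assumes "1 \<le> r" "p < 2 * r + 1" "a \<in> cyc_triangle r p" "c \<in> cyc_triangle r p"
  shows "cyc_dist (2 * r + 1) a c \<in> {0, 1, r}"
proof -
  have "((p + r) mod (2 * r + 1) + r) mod (2 * r + 1) = (p + 2 * r) mod (2 * r + 1)"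
    by (simp add: mod_simps add.assoc mult_2)
  then have "cyc_dist (2 * r + 1) ((p + r) mod (2 * r + 1)) ((p + 2 * r) mod (2 * r + 1)) = r"
    using cyc_dist_add_radius[of "(p + r) mod (2 * r + 1)" r] by simp
  then show ?thesis
    using assms cyc_dist_add_radius cyc_dist_add_diameter cyc_dist_sym[of "2 * r + 1"]
    unfolding cyc_triangle_def by auto
qed

lemma add_Suc_radius_mod_add_radius:
  "x < 2 * r + 1 \<Longrightarrow> ((x + Suc r) mod (2 * r + 1) + r) mod (2 * r + 1) = x"
proof -
  assume "x < 2 * r + 1"
  have "((x + Suc r) mod (2 * r + 1) + r) mod (2 * r + 1) = (x + Suc r + r) mod (2 * r + 1)"
    by (rule mod_add_left_eq)
  also have "x + Suc r + r = x + (2 * r + 1)" by simp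
  also have "(x + (2 * r + 1)) mod (2 * r + 1) = x"
    using \<open>x < 2 * r + 1\<close> by (simp only: mod_add_self2 mod_less)
  finally show ?thesis .
qed

context
  fixes r :: nat and X :: "nat set"
  assumes X: "X \<subseteq> {0..<2 * r + 1}"
    and shift_free: "\<And>x. x \<in> X \<Longrightarrow> (x + r) mod (2 * r + 1) \<notin> X"
begin

private abbreviation "back x \<equiv> (x + Suc r) mod (2 * r + 1)"

private lemma inj_on_back: "inj_on back X"
  by (rule inj_onI) (metis X add_Suc_radius_mod_add_radius atLeastLessThan_iff subsetD)

private lemma disjoint_back: "X \<inter> back ` X = {}"
  using X shift_free add_Suc_radius_mod_add_radius by fastforce

private lemma card_Un_back: "card (X \<union> back ` X) = 2 * card X"
  using card_Un_disjoint[OF _ _ disjoint_back] card_image[OF inj_on_back] finite_subset[OF X]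
  by simp

private lemma ex_Suc_mod_not_mem:
  assumes "X \<noteq> {}"
  shows "\<exists>y\<in>X. Suc y mod (2 * r + 1) \<notin> X"
proof (rule ccontr)
  assume "\<not> ?thesis"
  then have closed: "Suc y mod (2 * r + 1) \<in> X" if "y \<in> X" for y
    using that by blast
  obtain x where x: "x \<in> X" using assms by blast
  have "(x + k) mod (2 * r + 1) \<in> X" for k
  proof (induction k)
    case 0
    then show ?case using x X by auto
  next
    case (Suc k)
    then show ?case using closed[OF Suc] by (simp add: mod_Suc_eq)
  qed
  then show False using shift_free x by blast
qed

lemma card_le_radius_if_shift_free: "card X \<le> r"
proof -
  have "X \<union> back ` X \<subseteq> {0..<2 * r + 1}" using X by auto
  then have "card (X \<union> back ` X) \<le> 2 * r + 1" using card_mono[of "{0..<2 * r + 1}"] by fastforce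
  then show ?thesis using card_Un_back by simp
qed

lemma card_triangles_meeting_shift_free:
  assumes "X \<noteq> {}"
  shows "2 * card X + 1 \<le> card {p \<in> {0..<2 * r + 1}. X \<inter> cyc_triangle r p \<noteq> {}}"
    (is "_ \<le> card ?hit")
proof -
  \<comment> \<open>the triangles starting in X, those through X in the middle, and one through y at the end\<close>
  have "X \<subseteq> ?hit" using X unfolding cyc_triangle_def by auto
  moreover have "back ` X \<subseteq> ?hit"
    using X add_Suc_radius_mod_add_radius unfolding cyc_triangle_def by fastforce
  moreover obtain y where y: "y \<in> X" "Suc y mod (2 * r + 1) \<notin> X"
    using ex_Suc_mod_not_mem assms by blast
  define z where "z = Suc y mod (2 * r + 1)"
  have "(z + 2 * r) mod (2 * r + 1) = y"
  proof -
    have "(z + 2 * r) mod (2 * r + 1) = (y + (2 * r + 1)) mod (2 * r + 1)"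
      unfolding z_def by (simp add: mod_simps)
    also have "\<dots> = y" using X y(1) by (simp only: mod_add_self2 mod_less) auto
    finally show ?thesis .
  qed
  then have "z \<in> ?hit" using y(1) unfolding z_def cyc_triangle_def by auto
  moreover have "z \<notin> X \<union> back ` X"
  proof
    assume "z \<in> X \<union> back ` X"
    then obtain x where x: "x \<in> X" "z = back x" using y(2) z_def by blast
    have "(z + 2 * r) mod (2 * r + 1) = (x + Suc r + 2 * r) mod (2 * r + 1)"
      unfolding x(2) by (rule mod_add_left_eq)
    also have "x + Suc r + 2 * r = x + r + (2 * r + 1)" by simp
    also have "(x + r + (2 * r + 1)) mod (2 * r + 1) = (x + r) mod (2 * r + 1)"
      by (simp only: mod_add_self2)
    finally have "(x + r) mod (2 * r + 1) = y" using \<open>(z + 2 * r) mod (2 * r + 1) = y\<close> by simp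
    then show False using shift_free x(1) y(1) by blast
  qed
  ultimately have "insert z (X \<union> back ` X) \<subseteq> ?hit" by blast
  then have "card (insert z (X \<union> back ` X)) \<le> card ?hit" by (intro card_mono) auto
  then show ?thesis using card_Un_back finite_subset[OF X] \<open>z \<notin> X \<union> back ` X\<close> by simp
qed

lemma card_shift_free_le_card_triangles_meeting:
  "(2 * r + 1) * card X \<le> r * card {p \<in> {0..<2 * r + 1}. X \<inter> cyc_triangle r p \<noteq> {}}"
proof (cases "X = {}")
  case False
  have "(2 * r + 1) * card X \<le> r * (2 * card X + 1)"
    using card_le_radius_if_shift_free by (simp add: algebra_simps)
  also have "\<dots> \<le> r * card {p \<in> {0..<2 * r + 1}. X \<inter> cyc_triangle r p \<noteq> {}}"
    using card_triangles_meeting_shift_free[OF False] by (rule mult_le_mono2)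
  finally show ?thesis .
qed simp

end

lemma walk_len_cycle_graph_if_cyc_dist_le:
  assumes "3 \<le> m" "a < m" "c < m" "cyc_dist m a c \<le> k"
  shows "\<exists>j \<le> k. walk_len (cycle_graph m) a c j"
  using assms(2,4)
proof (induction k arbitrary: a)
  case 0
  then have "a = c" using assms cyc_dist_eq_0_iff by simp
  then have "walk_len (cycle_graph m) a c 0" using assms by (simp add: walk_len.walk_nil verts_cycle_graph)
  then show ?case by blast
next
  case (Suc k)
  show ?case
  proof (cases "a = c")
    case True
    then have "walk_len (cycle_graph m) a c 0" using assms by (simp add: walk_len.walk_nil verts_cycle_graph)
    then show ?thesis by blast
  next
    case False
    then obtain a' where a': "adj (cycle_graph m) a a'" "cyc_dist m a' c + 1 = cyc_dist m a c"
      using cyc_dist_step_toward[of a m c] adj_cyc_succ adj_cyc_pred assms Suc.prems by metis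
    then have "a' < m" using cycle_graph_adj_iff by blast
    then obtain j where "j \<le> k" "walk_len (cycle_graph m) a' c j"
      using Suc a' by fastforce
    then show ?thesis using a'(1) walk_len.walk_step by (metis Suc_le_mono)
  qed
qed

lemma cyc_dist_le_walk_len: "walk_len (cycle_graph m) a c k \<Longrightarrow> cyc_dist m a c \<le> k"
proof (induction rule: walk_len.induct)
  case (walk_step u w v k)
  have "v \<in> verts (cycle_graph m)" using walk_step(2) by (rule walk_len_end_in_verts)
  then have "cyc_dist m u v \<le> cyc_dist m w v + 1"
    using cyc_dist_adj_le[OF walk_step(1)] by (simp add: verts_cycle_graph)
  then show ?case using walk_step(3) by simp
qed simp

lemma connected_simple_graph_cycle_graph:
  assumes "3 \<le> m"
  shows "connected_simple_graph (cycle_graph m)"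
proof (rule connected_simple_graph_if_simple[OF simple_graph_cycle_graph])
  show "connected_graph (cycle_graph m)"
    unfolding connected_graph_def verts_cycle_graph
    by (meson atLeastLessThan_iff walk_len_cycle_graph_if_cyc_dist_le[OF assms _ _ order_refl])
qed

lemma gdist_cycle_graph:
  assumes "3 \<le> m" "a < m" "c < m"
  shows "gdist (cycle_graph m) a c = cyc_dist m a c"
proof -
  interpret C: connected_simple_graph "cycle_graph m"
    using connected_simple_graph_cycle_graph assms(1) .
  have "gdist (cycle_graph m) a c \<le> cyc_dist m a c"
    using walk_len_cycle_graph_if_cyc_dist_le[OF assms order_refl] C.gdist_le_walk_len by fastforce
  moreover have "cyc_dist m a c \<le> gdist (cycle_graph m) a c"
    using cyc_dist_le_walk_len C.walk_len_gdist assms by (simp add: verts_cycle_graph)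
  ultimately show ?thesis by simp
qed

section \<open>Strong products\<close>

lemma adj_strong_product_iff:
  "adj (strong_product G H) (a, b) (c, d) \<longleftrightarrow>
     (a = c \<and> adj H b d) \<or> (adj G a c \<and> b = d) \<or> (adj G a c \<and> adj H b d)"
  by (simp add: strong_product_def)

lemma verts_strong_product [simp]: "verts (strong_product G H) = verts G \<times> verts H"
  by (simp add: strong_product_def)

locale connected_simple_graph_pair =
  G: connected_simple_graph G + H: connected_simple_graph H
  for G :: "'a graph" and H :: "'b graph"
begin

abbreviation "P \<equiv> strong_product G H"

lemma gdist_le_walk_len_strong_product:
  assumes "walk_len P p q k" "p \<in> verts P"
  shows "gdist G (fst p) (fst q) \<le> k \<and> gdist H (snd p) (snd q) \<le> k"
  using assms
proof (induction rule: walk_len.induct)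
  case (walk_nil u)
  then show ?case using G.gdist_self H.gdist_self by (cases u) auto
next
  case (walk_step u w v k)
  obtain a b x y where uw: "u = (a, b)" "w = (x, y)" by fastforce
  have v: "fst v \<in> verts G" "snd v \<in> verts H"
    using walk_len_end_in_verts[OF walk_step(2)] by auto
  have steps: "a = x \<or> adj G a x" "b = y \<or> adj H b y"
    using walk_step(1) unfolding uw adj_strong_product_iff by auto
  have "gdist G a (fst v) \<le> gdist G x (fst v) + 1"
    using steps(1) G.gdist_adj_le walk_step.prems uw v by auto
  moreover have "gdist H b (snd v) \<le> gdist H y (snd v) + 1"
    using steps(2) H.gdist_adj_le walk_step.prems uw v by auto
  moreover have "w \<in> verts P"
    using steps walk_step.prems uw G.adj_in_verts H.adj_in_verts by auto
  ultimately show ?case using walk_step.IH uw by auto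
qed

lemma walk_len_strong_product_if_gdist_le:
  assumes "x \<in> verts G" "y \<in> verts H" "c \<in> verts G" "d \<in> verts H"
    and "gdist G x c \<le> k" "gdist H y d \<le> k"
  shows "\<exists>j\<le>k. walk_len P (x, y) (c, d) j"
  using assms
proof (induction k arbitrary: x y)
  case 0
  then have "x = c" "y = d" using G.gdist_eq_0_iff H.gdist_eq_0_iff by simp_all
  then have "walk_len P (x, y) (c, d) 0" using 0 by (simp add: walk_len.walk_nil)
  then show ?case by blast
next
  case (Suc k)
  show ?case
  proof (cases "x = c \<and> y = d")
    case True
    then have "walk_len P (x, y) (c, d) 0" using Suc.prems by (simp add: walk_len.walk_nil)
    then show ?thesis by blast
  next
    case False
    obtain x' where x': "(x = c \<and> x' = x) \<or> (x \<noteq> c \<and> adj G x x')" "x' \<in> verts G" "gdist G x' c \<le> k"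
      using G.obtain_step_towards Suc.prems by blast
    obtain y' where y': "(y = d \<and> y' = y) \<or> (y \<noteq> d \<and> adj H y y')" "y' \<in> verts H" "gdist H y' d \<le> k"
      using H.obtain_step_towards Suc.prems by blast
    have "adj P (x, y) (x', y')"
      unfolding adj_strong_product_iff using x'(1) y'(1) False by auto
    moreover obtain j where "j \<le> k" "walk_len P (x', y') (c, d) j"
      using Suc.IH[of x' y'] Suc.prems x' y' by auto
    ultimately show ?thesis using walk_len.walk_step by (metis Suc_le_mono)
  qed
qed

sublocale P: connected_simple_graph P
proof
  show "finite (verts P)" using G.finite_verts H.finite_verts by simp
  show "adj P p q \<Longrightarrow> p \<in> verts P \<Longrightarrow> q \<in> verts P" for p q
    using G.adj_in_verts H.adj_in_verts by (cases p; cases q) (auto simp: adj_strong_product_iff)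
  show "adj P p q \<Longrightarrow> adj P q p" for p q
    using G.adj_sym H.adj_sym by (cases p; cases q) (auto simp: adj_strong_product_iff)
  show "\<not> adj P p p" for p
    using G.adj_irrefl H.adj_irrefl by (cases p) (auto simp: adj_strong_product_iff)
  show "connected_graph P"
    unfolding connected_graph_def
    using walk_len_strong_product_if_gdist_le[OF _ _ _ _ max.cobounded1 max.cobounded2] by fastforce
qed

lemma gdist_strong_product:
  assumes "a \<in> verts G" "c \<in> verts G" "b \<in> verts H" "d \<in> verts H"
  shows "gdist P (a, b) (c, d) = max (gdist G a c) (gdist H b d)"
proof (rule antisym)
  show "gdist P (a, b) (c, d) \<le> max (gdist G a c) (gdist H b d)"
    using walk_len_strong_product_if_gdist_le[OF _ _ _ _ max.cobounded1 max.cobounded2] assms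
      P.gdist_le_walk_len by (meson le_trans)
  show "max (gdist G a c) (gdist H b d) \<le> gdist P (a, b) (c, d)"
    using gdist_le_walk_len_strong_product[OF P.walk_len_gdist] assms by fastforce
qed

end

section \<open>Strong products with an odd cycle\<close>

text \<open>
  Twin classes of H are represented by their common closed neighbourhood; the positions of a
  class t in M are the cycle coordinates of the vertices of M lying over t.
\<close>

definition twin_positions :: "'a graph \<Rightarrow> (nat \<times> 'a) set \<Rightarrow> 'a set \<Rightarrow> nat set" where
  "twin_positions H M t = {a. \<exists>b. (a, b) \<in> M \<and> closed_nbhd H b = t}"

locale odd_cycle_product = H: connected_simple_graph H for H :: "'a graph" +
  fixes r :: nat
  assumes radius_pos: "1 \<le> r"
begin

abbreviation "m \<equiv> 2 * r + 1"

sublocale connected_simple_graph_pair "cycle_graph m" H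
  using connected_simple_graph_cycle_graph radius_pos H.connected_simple_graph_axioms
  by (simp add: connected_simple_graph_pair_def)

lemma gdist_odd_cycle_product:
  assumes "a < m" "c < m" "b \<in> verts H" "d \<in> verts H"
  shows "gdist P (a, b) (c, d) = max (cyc_dist m a c) (gdist H b d)"
  using gdist_strong_product gdist_cycle_graph radius_pos assms by (simp add: verts_cycle_graph)

lemma adj_odd_cycle_product_cases:
  assumes "adj P (a, b) (x, y)" "a < m" "b \<in> verts H"
  shows "x < m" "y \<in> verts H" "x = a \<or> adj (cycle_graph m) a x" "y = b \<or> adj H b y"
proof -
  have "(x, y) \<in> verts P" using P.adj_in_verts[OF assms(1)] assms(2,3) by (simp add: verts_cycle_graph)
  then show "x < m" "y \<in> verts H" by (auto simp: verts_cycle_graph)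
  show "x = a \<or> adj (cycle_graph m) a x" "y = b \<or> adj H b y"
    using assms(1) unfolding adj_strong_product_iff by auto
qed

lemma cyc_dist_le_Suc_if_adj_odd_cycle_product:
  assumes "adj P (a, b) (x, y)" "a < m" "b \<in> verts H" "c < m"
  shows "cyc_dist m x c \<le> cyc_dist m a c + 1"
  using adj_odd_cycle_product_cases[OF assms(1-3)] cyc_dist_adj_le[OF _ assms(4)]
    simple_graph_cycle_graph unfolding simple_graph_def by fastforce

lemma maximally_distant_layer_if_odd_cycle_product:
  assumes V: "a < m" "c < m" "b \<in> verts H" "d \<in> verts H"
    and max: "maximally_distant P (a, b) (c, d)" and lt: "cyc_dist m a c < gdist H b d"
  shows "maximally_distant H b d"
  unfolding maximally_distant_def
proof (intro allI impI)
  fix w assume w: "adj H b w"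
  have "w \<in> verts H" using H.adj_in_verts w V by blast
  moreover have "adj P (a, b) (a, w)" using w unfolding adj_strong_product_iff by blast
  then have "gdist P (a, w) (c, d) \<le> gdist P (a, b) (c, d)"
    using max unfolding maximally_distant_def by blast
  ultimately show "gdist H w d \<le> gdist H b d"
    using gdist_odd_cycle_product V lt by auto
qed

lemma cyc_dist_eq_radius_if_maximally_distant_odd_cycle_product:
  assumes V: "a < m" "c < m" "b \<in> verts H" "d \<in> verts H"
    and max: "maximally_distant P (a, b) (c, d)" and ge: "gdist H b d \<le> cyc_dist m a c"
  shows "cyc_dist m a c = r"
proof (rule ccontr)
  assume "cyc_dist m a c \<noteq> r"
  then have "cyc_dist m a c < r" using cyc_dist_le_radius[of r a c] by auto
  moreover have "3 \<le> m" using radius_pos by simp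
  ultimately obtain a' where a': "adj (cycle_graph m) a a'" "cyc_dist m a' c = cyc_dist m a c + 1"
    using cyc_dist_step_away[OF V(1,2)] adj_cyc_succ[OF V(1)] adj_cyc_pred[OF V(1)] by blast
  have "a' < m" using a' cycle_graph_adj_iff by blast
  moreover have "adj P (a, b) (a', b)" using a'(1) unfolding adj_strong_product_iff by blast
  then have "gdist P (a', b) (c, d) \<le> gdist P (a, b) (c, d)"
    using max unfolding maximally_distant_def by blast
  ultimately show False using gdist_odd_cycle_product V ge a'(2) by auto
qed

lemma maximally_distant_odd_cycle_product_if_antipodal:
  assumes V: "a < m" "c < m" "b \<in> verts H" "d \<in> verts H"
    and antipodal: "cyc_dist m a c = r" and layer: "b = d \<or> maximally_distant H b d"
  shows "maximally_distant P (a, b) (c, d)"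
  unfolding maximally_distant_def
proof (intro allI impI)
  fix p assume p: "adj P (a, b) p"
  obtain x y where xy: "p = (x, y)" by fastforce
  note step = adj_odd_cycle_product_cases[OF p[unfolded xy] V(1,3)]
  have "gdist H y d \<le> max r (gdist H b d)"
  proof -
    consider "y = b" | "adj H b y" "b = d" | "adj H b y" "maximally_distant H b d"
      using step(4) layer by blast
    then show ?thesis
    proof cases
      case 2
      then have "gdist H y d = 1" using H.gdist_eq_1_iff_adj H.adj_sym step(2) V(4) by simp
      then show ?thesis using radius_pos by simp
    next
      case 3
      then show ?thesis unfolding maximally_distant_def by fastforce
    qed simp
  qed
  then show "gdist P p (c, d) \<le> gdist P (a, b) (c, d)"
    using gdist_odd_cycle_product step(1,2) V xy antipodal cyc_dist_le_radius[of r x c] by auto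
qed

lemma maximally_distant_odd_cycle_product_if_layer:
  assumes V: "a < m" "c < m" "b \<in> verts H" "d \<in> verts H"
    and layer: "maximally_distant H b d" and lt: "cyc_dist m a c < gdist H b d"
  shows "maximally_distant P (a, b) (c, d)"
  unfolding maximally_distant_def
proof (intro allI impI)
  fix p assume p: "adj P (a, b) p"
  obtain x y where xy: "p = (x, y)" by fastforce
  note step = adj_odd_cycle_product_cases[OF p[unfolded xy] V(1,3)]
  have "cyc_dist m x c \<le> cyc_dist m a c + 1"
    using cyc_dist_le_Suc_if_adj_odd_cycle_product p xy V by blast
  moreover have "gdist H y d \<le> gdist H b d"
    using step(4) layer unfolding maximally_distant_def by auto
  ultimately show "gdist P p (c, d) \<le> gdist P (a, b) (c, d)"
    using gdist_odd_cycle_product step(1,2) V xy lt by auto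
qed

lemma mmd_odd_cycle_product_cases:
  assumes mmd: "mutually_maximally_distant P (a, b) (c, d)"
  shows "cyc_dist m a c = r \<or> mutually_maximally_distant H b d"
proof -
  have V: "a < m" "c < m" "b \<in> verts H" "d \<in> verts H"
    and max: "maximally_distant P (a, b) (c, d)" "maximally_distant P (c, d) (a, b)"
    using mmd unfolding mutually_maximally_distant_def by (auto simp: verts_cycle_graph)
  show ?thesis
  proof (cases "cyc_dist m a c < gdist H b d")
    case True
    then have "b \<noteq> d" using H.gdist_self V by auto
    moreover have "cyc_dist m c a < gdist H d b"
      using True cyc_dist_sym[of m c a] H.gdist_sym[of d b] V by simp
    ultimately show ?thesis
      using True V max maximally_distant_layer_if_odd_cycle_product
      unfolding mutually_maximally_distant_def by blast
  next
    case False
    then show ?thesis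
      using cyc_dist_eq_radius_if_maximally_distant_odd_cycle_product V max by simp
  qed
qed

lemma mmd_odd_cycle_product_if_antipodal:
  assumes V: "a < m" "c < m" "b \<in> verts H" "d \<in> verts H"
    and antipodal: "cyc_dist m a c = r" and layer: "b = d \<or> mutually_maximally_distant H b d"
  shows "mutually_maximally_distant P (a, b) (c, d)"
proof -
  have "(a, b) \<noteq> (c, d)" using antipodal radius_pos by auto
  moreover have "cyc_dist m c a = r" using antipodal cyc_dist_sym[of m c a] by simp
  ultimately show ?thesis
    using V antipodal layer maximally_distant_odd_cycle_product_if_antipodal
    unfolding mutually_maximally_distant_def by (auto simp: verts_cycle_graph)
qed

lemma mmd_odd_cycle_product_if_mmd_layer:
  assumes V: "a < m" "c < m" and layer: "mutually_maximally_distant H b d"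
    and lt: "cyc_dist m a c < gdist H b d"
  shows "mutually_maximally_distant P (a, b) (c, d)"
proof -
  have "b \<in> verts H" "d \<in> verts H" "b \<noteq> d"
    using layer unfolding mutually_maximally_distant_def by auto
  moreover have "cyc_dist m c a < gdist H d b"
    using lt cyc_dist_sym[of m c a] H.gdist_sym[of d b] calculation by simp
  ultimately show ?thesis
    using V layer lt maximally_distant_odd_cycle_product_if_layer
    unfolding mutually_maximally_distant_def by (auto simp: verts_cycle_graph)
qed

lemma strong_resolving_set_odd_cycle_product:
  assumes W: "strong_resolving_set H W"
  shows "strong_resolving_set P ({0..<m} \<times> W \<union> {0..r} \<times> (verts H - W))"
proof (rule P.strong_resolving_set_if_covers_mmd)
  show "{0..<m} \<times> W \<union> {0..r} \<times> (verts H - W) \<subseteq> verts P"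
    using W unfolding strong_resolving_set_def by (auto simp: verts_cycle_graph)
next
  fix p q assume mmd: "mutually_maximally_distant P p q"
  obtain a b c d where pq: "p = (a, b)" "q = (c, d)" by fastforce
  have V: "a < m" "c < m" "b \<in> verts H" "d \<in> verts H"
    using mmd pq unfolding mutually_maximally_distant_def by (auto simp: verts_cycle_graph)
  consider "b \<in> W \<or> d \<in> W" | "b \<notin> W" "d \<notin> W" by blast
  then show "p \<in> {0..<m} \<times> W \<union> {0..r} \<times> (verts H - W) \<or> q \<in> {0..<m} \<times> W \<union> {0..r} \<times> (verts H - W)"
  proof cases
    case 1
    then show ?thesis using V pq by auto
  next
    case 2
    then have "\<not> mutually_maximally_distant H b d" using H.strong_resolving_set_covers_mmd W by blast
    then have "cyc_dist m a c = r" using mmd_odd_cycle_product_cases mmd pq by blast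
    then have "a \<le> r \<or> c \<le> r" using cyc_dist_lt_radius_upper_half[of r a c] V by fastforce
    then show ?thesis using V 2 pq by auto
  qed
qed

lemma strong_metric_dim_odd_cycle_product_le:
  "strong_metric_dim P \<le> card (verts H) * (r + 1) + r * strong_metric_dim H"
proof -
  obtain W where W: "strong_resolving_set H W" "card W = strong_metric_dim H"
    by (rule H.strong_metric_basis_exists)
  have WV: "W \<subseteq> verts H" and fin: "finite W" "finite (verts H - W)"
    using W(1) H.finite_verts finite_subset unfolding strong_resolving_set_def by auto
  have "strong_metric_dim P \<le> card ({0..<m} \<times> W \<union> {0..r} \<times> (verts H - W))"
    using P.strong_metric_dim_le strong_resolving_set_odd_cycle_product W(1) by blast
  also have "\<dots> = m * card W + (r + 1) * (card (verts H) - card W)"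
    using card_Un_disjoint[of "{0..<m} \<times> W" "{0..r} \<times> (verts H - W)"] fin
      card_Diff_subset[OF fin(1) WV] by (auto simp: card_cartesian_product)
  also have "\<dots> = card (verts H) * (r + 1) + r * card W"
  proof -
    obtain k where "card (verts H) = card W + k"
      using card_mono[OF H.finite_verts WV] le_iff_add by blast
    then show ?thesis by (simp add: algebra_simps)
  qed
  finally show ?thesis using W(2) by simp
qed

context
  fixes M :: "(nat \<times> 'a) set"
  assumes M_verts: "M \<subseteq> verts P"
    and M_mmd_free: "\<And>p q. p \<in> M \<Longrightarrow> q \<in> M \<Longrightarrow> \<not> mutually_maximally_distant P p q"
begin

lemma eq_if_twins_in_mmd_free:
  assumes "(a, b) \<in> M" "(a, d) \<in> M" "closed_nbhd H b = closed_nbhd H d"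
  shows "b = d"
proof (rule ccontr)
  assume "b \<noteq> d"
  have V: "a < m" "b \<in> verts H" "d \<in> verts H" using assms M_verts by (auto simp: verts_cycle_graph)
  then have "mutually_maximally_distant H b d" "gdist H b d = 1"
    using H.mmd_if_twins[OF V(2,3) \<open>b \<noteq> d\<close> assms(3)]
      adj_if_twins[OF \<open>b \<noteq> d\<close> assms(3)] H.gdist_eq_1_iff_adj[OF V(2,3)] by simp_all
  then have "mutually_maximally_distant P (a, b) (a, d)"
    using mmd_odd_cycle_product_if_mmd_layer V by simp
  with M_mmd_free assms show False by blast
qed

lemma card_eq_sum_card_twin_positions:
  "card M = (\<Sum>t \<in> closed_nbhd H ` verts H. card (twin_positions H M t))"
proof -
  define F where "F t = {p \<in> M. closed_nbhd H (snd p) = t}" for t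
  have fin: "finite M" using finite_subset[OF M_verts P.finite_verts] .
  have "M = (\<Union>t \<in> closed_nbhd H ` verts H. F t)" using M_verts unfolding F_def by auto
  then have "card M = (\<Sum>t \<in> closed_nbhd H ` verts H. card (F t))"
    using card_UN_disjoint[of "closed_nbhd H ` verts H" F] fin H.finite_verts
    unfolding F_def by auto
  also have "\<dots> = (\<Sum>t \<in> closed_nbhd H ` verts H. card (twin_positions H M t))"
  proof (rule sum.cong)
    fix t
    have "inj_on fst (F t)"
      using eq_if_twins_in_mmd_free unfolding F_def inj_on_def by fastforce
    moreover have "fst ` F t = twin_positions H M t"
      unfolding F_def twin_positions_def by force
    ultimately show "card (F t) = card (twin_positions H M t)" using card_image by fastforce
  qed simp
  finally show ?thesis .
qed

lemma twin_positions_shift_free: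
  assumes "a \<in> twin_positions H M t"
  shows "(a + r) mod m \<notin> twin_positions H M t"
proof
  assume "(a + r) mod m \<in> twin_positions H M t"
  then obtain d where d: "((a + r) mod m, d) \<in> M" "closed_nbhd H d = t"
    unfolding twin_positions_def by blast
  obtain b where b: "(a, b) \<in> M" "closed_nbhd H b = t"
    using assms unfolding twin_positions_def by blast
  have V: "a < m" "b \<in> verts H" "d \<in> verts H" using b(1) d(1) M_verts by (auto simp: verts_cycle_graph)
  have "b = d \<or> mutually_maximally_distant H b d" using H.mmd_if_twins V b(2) d(2) by blast
  then have "mutually_maximally_distant P (a, b) ((a + r) mod m, d)"
    using mmd_odd_cycle_product_if_antipodal cyc_dist_add_radius V by simp
  with M_mmd_free b(1) d(1) show False by blast
qed

lemma card_twin_classes_meeting_triangle_le: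
  assumes p: "p < m"
  shows "card {t \<in> closed_nbhd H ` verts H. twin_positions H M t \<inter> cyc_triangle r p \<noteq> {}}
    \<le> card (verts H) - strong_metric_dim H"
    (is "card ?C \<le> _")
proof -
  define B where "B = {b. \<exists>a \<in> cyc_triangle r p. (a, b) \<in> M}"
  have "?C = closed_nbhd H ` B"
    using M_verts unfolding B_def twin_positions_def by auto
  \<comment> \<open>one representative vertex of every twin class that meets the triangle\<close>
  define R where "R = inv_into B (closed_nbhd H) ` ?C"
  have RB: "R \<subseteq> B" unfolding R_def using \<open>?C = _\<close> by (auto intro: inv_into_into)
  have card_R: "card R = card ?C"
    unfolding R_def using \<open>?C = _\<close> by (intro card_image inj_on_inv_into) simp
  have RV: "R \<subseteq> verts H" using RB M_verts unfolding B_def by auto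
  have "\<not> mutually_maximally_distant H x y" if xy: "x \<in> R" "y \<in> R" for x y
  proof
    assume mmd: "mutually_maximally_distant H x y"
    obtain a c where ac: "a \<in> cyc_triangle r p" "(a, x) \<in> M" "c \<in> cyc_triangle r p" "(c, y) \<in> M"
      using RB xy unfolding B_def by blast
    have "closed_nbhd H x \<noteq> closed_nbhd H y"
      using xy mmd \<open>?C = _\<close> unfolding R_def mutually_maximally_distant_def
      by (auto simp: f_inv_into_f)
    then have "2 \<le> gdist H x y" using H.gdist_ge_2_if_mmd_not_twins mmd by blast
    moreover have "cyc_dist m a c \<in> {0, 1, r}" using cyc_dist_in_cyc_triangle radius_pos p ac by blast
    ultimately consider "cyc_dist m a c = r" | "cyc_dist m a c < gdist H x y" by fastforce
    moreover have "a < m" "c < m" using ac M_verts by (auto simp: verts_cycle_graph)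
    ultimately have "mutually_maximally_distant P (a, x) (c, y)"
      using mmd_odd_cycle_product_if_mmd_layer mmd_odd_cycle_product_if_antipodal mmd RV xy
      by cases blast+
    with M_mmd_free ac show False by blast
  qed
  then have "strong_metric_dim H \<le> card (verts H) - card R"
    using H.strong_metric_dim_le_card_diff_mmd_free RV by blast
  then show ?thesis
    using card_R card_mono[OF H.finite_verts RV] H.strong_metric_dim_le_verts by linarith
qed

lemma card_mmd_free_odd_cycle_product_le:
  "card M \<le> r * (card (verts H) - strong_metric_dim H)"
proof -
  let ?T = "closed_nbhd H ` verts H" and ?N = "twin_positions H M"
  let ?meets = "\<lambda>t p. ?N t \<inter> cyc_triangle r p \<noteq> {}"
  have N_cycle: "?N t \<subseteq> {0..<m}" for t
    using M_verts unfolding twin_positions_def by (auto simp: verts_cycle_graph)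
  have "m * card M = (\<Sum>t\<in>?T. m * card (?N t))"
    using card_eq_sum_card_twin_positions by (simp add: sum_distrib_left)
  also have "\<dots> \<le> (\<Sum>t\<in>?T. r * card {p \<in> {0..<m}. ?meets t p})"
    using card_shift_free_le_card_triangles_meeting[OF N_cycle twin_positions_shift_free]
    by (intro sum_mono) blast
  also have "\<dots> = r * (\<Sum>t\<in>?T. card {p \<in> {0..<m}. ?meets t p})"
    by (simp add: sum_distrib_left)
  also have "\<dots> = r * (\<Sum>p\<in>{0..<m}. card {t \<in> ?T. ?meets t p})"
    using sum.swap_restrict[of ?T "{0..<m}" "\<lambda>_ _. 1::nat" ?meets] H.finite_verts
    by (simp only: sum_constant of_nat_id mult_1_right finite_imageI finite_atLeastLessThan)
  also have "\<dots> \<le> r * (\<Sum>p\<in>{0..<m}. card (verts H) - strong_metric_dim H)"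
    using card_twin_classes_meeting_triangle_le by (intro mult_le_mono2 sum_mono) simp
  also have "\<dots> = m * (r * (card (verts H) - strong_metric_dim H))"
    by (simp only: sum_constant card_atLeastLessThan diff_zero of_nat_id mult.left_commute)
  finally show ?thesis by (simp only: mult_le_cancel1)
qed

end

lemma strong_metric_dim_odd_cycle_product_ge:
  "card (verts H) * (r + 1) + r * strong_metric_dim H \<le> strong_metric_dim P"
proof -
  obtain S where S: "strong_resolving_set P S" "card S = strong_metric_dim P"
    by (rule P.strong_metric_basis_exists)
  have SV: "S \<subseteq> verts P" using S(1) unfolding strong_resolving_set_def by blast
  have "card (verts P - S) \<le> r * (card (verts H) - strong_metric_dim H)"
    using P.strong_resolving_set_covers_mmd[OF S(1)]
    by (intro card_mmd_free_odd_cycle_product_le) blast+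
  moreover have "card (verts P - S) = m * card (verts H) - card S"
    using card_Diff_subset[OF finite_subset[OF SV P.finite_verts] SV]
    by (simp add: verts_cycle_graph card_cartesian_product)
  moreover have "card S \<le> m * card (verts H)"
    using card_mono[OF P.finite_verts SV] by (simp add: verts_cycle_graph card_cartesian_product)
  ultimately have "m * card (verts H) \<le> r * (card (verts H) - strong_metric_dim H) + card S"
    by linarith
  moreover obtain k where "card (verts H) = strong_metric_dim H + k"
    using H.strong_metric_dim_le_verts le_iff_add by blast
  ultimately show ?thesis using S(2) by (simp add: algebra_simps)
qed

lemma strong_metric_dim_odd_cycle_product:
  "strong_metric_dim P = card (verts H) * (r + 1) + r * strong_metric_dim H"
  using strong_metric_dim_odd_cycle_product_le strong_metric_dim_odd_cycle_product_ge by simp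

end

theorem theorem19:
  fixes H :: "'a graph" and r n :: nat
  assumes "simple_graph H" and "connected_graph H"
    and "n = card (verts H)" and "n \<ge> 2" and "r \<ge> 1"
  shows "int n * (int r + 1) + int r * (int (strong_metric_dim H) - 1)
           \<le> int (strong_metric_dim (strong_product (cycle_graph (2 * r + 1)) H))
       \<and> int (strong_metric_dim (strong_product (cycle_graph (2 * r + 1)) H))
           \<le> int n * (int r + 1) + int r * int (strong_metric_dim H)"
proof -
  interpret odd_cycle_product H r
    using assms(1,2,5) by (intro odd_cycle_product.intro odd_cycle_product_axioms.intro
      connected_simple_graph_if_simple)
  have "int (strong_metric_dim (strong_product (cycle_graph (2 * r + 1)) H))
      = int n * (int r + 1) + int r * int (strong_metric_dim H)"
    using strong_metric_dim_odd_cycle_product assms(3) by (simp add: algebra_simps)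
  then show ?thesis by (simp add: algebra_simps)
qed

end
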